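(* Let $X$ be a finite set, $\mathcal{T}_X$ the full transformation semigroup on $X$, and $(\mathcal{T}_X,\leq)$ the ordered full transformation semigroup with the natural partial order. For $f,g\in\mathcal{T}_X$, $f\,\mathscr{L}\,g$ in the ordered semigroup $(\mathcal{T}_X,\leq)$ if and only if $f\,\mathscr{L}\,g$ in the semigroup $\mathcal{T}_X$.
   Context: $\mathcal{T}_X$ is the semigroup of all maps $X\to X$ under composition, with maps written on the right and composed left to right, so that $\operatorname{Im}(\alpha g)\subseteq\operatorname{Im} g$. The natural partial order: $f\leq g$ iff $f\mathcal{T}_X^1\subseteq g\mathcal{T}_X^1$ and $f=\alpha f=\alpha g$ for some $\alpha\in\mathcal{T}_X$; with it, $(\mathcal{T}_X,\leq)$ is a regular ordered semigroup. In an ordered semigroup $S$, $a\,\mathscr{L}\,b$ iff $(a\cup Sa]=(b\cup Sb]$, where $(A]=\{x: x\leq a\text{ for some }a\in A\}$. In the plain semigroup $\mathcal{T}_X$, $\mathscr{L}$ is the usual Green's relation ($f\,\mathscr{L}\,g$ iff $\mathcal{T}_X^1 f=\mathcal{T}_X^1 g$, equivalently $\operatorname{Im}f=\operatorname{Im}g$). *)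

theory Defs
  imports Main
begin

text \<open>Full transformation semigroup T_X on a finite type 'a (X = UNIV).
  Maps are written on the right and composed left to right:
  x (f g) = (x f) g, so the product f g is the function g o f.\<close>

definition tmul :: "('a \<Rightarrow> 'a) \<Rightarrow> ('a \<Rightarrow> 'a) \<Rightarrow> ('a \<Rightarrow> 'a)" where
  "tmul f g = g \<circ> f"

definition right_ideal1 :: "('a \<Rightarrow> 'a) \<Rightarrow> ('a \<Rightarrow> 'a) set" where
  "right_ideal1 f = {f} \<union> {tmul f h | h. True}"

definition left_ideal1 :: "('a \<Rightarrow> 'a) \<Rightarrow> ('a \<Rightarrow> 'a) set" where
  "left_ideal1 f = {f} \<union> {tmul h f | h. True}"

definition nat_le :: "('a \<Rightarrow> 'a) \<Rightarrow> ('a \<Rightarrow> 'a) \<Rightarrow> bool" where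
  "nat_le f g \<longleftrightarrow> right_ideal1 f \<subseteq> right_ideal1 g \<and>
     (\<exists>\<alpha>. f = tmul \<alpha> f \<and> f = tmul \<alpha> g)"

definition down :: "('a \<Rightarrow> 'a) set \<Rightarrow> ('a \<Rightarrow> 'a) set" where
  "down A = {x. \<exists>a\<in>A. nat_le x a}"

definition ordL :: "('a \<Rightarrow> 'a) \<Rightarrow> ('a \<Rightarrow> 'a) \<Rightarrow> bool" where
  "ordL f g \<longleftrightarrow>
     down ({f} \<union> {tmul s f | s. True}) = down ({g} \<union> {tmul s g | s. True})"

definition semL :: "('a \<Rightarrow> 'a) \<Rightarrow> ('a \<Rightarrow> 'a) \<Rightarrow> bool" where
  "semL f g \<longleftrightarrow> left_ideal1 f = left_ideal1 g"

end

theory Submission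
  imports Defs
begin

text \<open>If \<open>f \<le> g\<close> in the natural order then \<open>f = \<alpha> g\<close> for some \<open>\<alpha>\<close>, so every
  principal left ideal \<open>T\<^sup>1 f\<close> is already down-closed; thus
  \<open>(f \<union> T f] = T\<^sup>1 f\<close> and the two relations \<open>\<L>\<close> coincide.\<close>

lemma nat_le_refl: "nat_le f f"
  unfolding nat_le_def by (auto intro: exI[of _ id] simp: tmul_def)

lemma nat_le_imp_left_multiple:
  assumes "nat_le x a"
  obtains \<alpha> where "x = tmul \<alpha> a"
  using assms unfolding nat_le_def by blast

lemma tmul_left_ideal1:
  assumes "a \<in> left_ideal1 f"
  shows "tmul h a \<in> left_ideal1 f"
  using assms unfolding left_ideal1_def by (auto simp: tmul_def comp_assoc)

lemma down_left_ideal1: "down (left_ideal1 f) = left_ideal1 f"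
proof
  show "down (left_ideal1 f) \<subseteq> left_ideal1 f"
    unfolding down_def
    by (auto elim: nat_le_imp_left_multiple intro: tmul_left_ideal1)
  show "left_ideal1 f \<subseteq> down (left_ideal1 f)"
    unfolding down_def using nat_le_refl by blast
qed

theorem mainTheorem6:
  fixes f g :: "'a::finite \<Rightarrow> 'a"
  shows "ordL f g \<longleftrightarrow> semL f g"
proof -
  have "{h} \<union> {tmul s h | s. True} = left_ideal1 h" for h :: "'a \<Rightarrow> 'a"
    by (simp add: left_ideal1_def)
  then show ?thesis
    unfolding ordL_def semL_def by (simp add: down_left_ideal1)
qed

end
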